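(* If $X$ is a topological space satisfying ${\sf S}_1(\mathcal{G}_K,\mathcal{G}_\Gamma)$, then $X$ is productively Lindel\"of, productively Menger, and productively Hurewicz.
   Context: All spaces are infinite ${\sf T}_1$ topological spaces. $\mathcal{G}_K$ is the family of all collections $\mathcal{U}$ of ${\sf G}_\delta$ subsets of $X$ with $X\notin\mathcal{U}$ such that each compact subset of $X$ is contained in some member of $\mathcal{U}$. $\mathcal{G}_\Gamma$ is the family of infinite collections $\mathcal{U}$ of ${\sf G}_\delta$ subsets of $X$ such that every infinite subcollection of $\mathcal{U}$ covers $X$. ${\sf S}_1(\mathcal{A},\mathcal{B})$: for each sequence $(A_n)$ of elements of $\mathcal{A}$ there are $B_n\in A_n$ with $\{B_n:n\in\mathbb{N}\}\in\mathcal{B}$. A space is Menger if for each sequence $(\mathcal{U}_n)$ of open covers there are finite $\mathcal{V}_n\subseteq\mathcal{U}_n$ with $\bigcup_n\mathcal{V}_n$ a cover; it is Hurewicz if for each sequence $(\mathcal{U}_n)$ of open covers there are finite $\mathcal{V}_n\subseteq\mathcal{U}_n$ such that each point belongs to $\bigcup\mathcal{V}_n$ for all but finitely many $n$. For a property ${\sf Q}$, $X$ is productively ${\sf Q}$ if $X\times Y$ has ${\sf Q}$ for every space $Y$ having ${\sf Q}$. *)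

theory Defs
  imports "HOL-Analysis.Analysis"
begin

definition open_cover :: "'a topology \<Rightarrow> 'a set set \<Rightarrow> bool" where
  "open_cover X \<U> \<longleftrightarrow> (\<forall>U\<in>\<U>. openin X U) \<and> \<Union>\<U> = topspace X"

definition G_K :: "'a topology \<Rightarrow> 'a set set set" where
  "G_K X = {\<U>. (\<forall>U\<in>\<U>. gdelta_in X U) \<and> topspace X \<notin> \<U> \<and>
                (\<forall>K. compactin X K \<longrightarrow> (\<exists>U\<in>\<U>. K \<subseteq> U))}"

definition G_Gamma :: "'a topology \<Rightarrow> 'a set set set" where
  "G_Gamma X = {\<U>. infinite \<U> \<and> (\<forall>U\<in>\<U>. gdelta_in X U) \<and>
                    (\<forall>\<V>. \<V> \<subseteq> \<U> \<and> infinite \<V> \<longrightarrow> \<Union>\<V> = topspace X)}"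

definition S1 :: "'a set set set \<Rightarrow> 'a set set set \<Rightarrow> bool" where
  "S1 \<A> \<B> \<longleftrightarrow> (\<forall>A :: nat \<Rightarrow> 'a set set. (\<forall>n. A n \<in> \<A>) \<longrightarrow>
                 (\<exists>B :: nat \<Rightarrow> 'a set. (\<forall>n. B n \<in> A n) \<and> range B \<in> \<B>))"

definition Menger_space :: "'a topology \<Rightarrow> bool" where
  "Menger_space X \<longleftrightarrow> (\<forall>\<U> :: nat \<Rightarrow> 'a set set. (\<forall>n. open_cover X (\<U> n)) \<longrightarrow>
      (\<exists>\<V> :: nat \<Rightarrow> 'a set set. (\<forall>n. finite (\<V> n) \<and> \<V> n \<subseteq> \<U> n) \<and>
           \<Union>(\<Union>n. \<V> n) = topspace X))"

definition Hurewicz_space :: "'a topology \<Rightarrow> bool" where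
  "Hurewicz_space X \<longleftrightarrow> (\<forall>\<U> :: nat \<Rightarrow> 'a set set. (\<forall>n. open_cover X (\<U> n)) \<longrightarrow>
      (\<exists>\<V> :: nat \<Rightarrow> 'a set set. (\<forall>n. finite (\<V> n) \<and> \<V> n \<subseteq> \<U> n) \<and>
           (\<forall>x\<in>topspace X. \<forall>\<^sub>F n in sequentially. x \<in> \<Union>(\<V> n))))"

text \<open>X is productively Q: X \<times> Y has Q for every space Y having Q
  (spaces range over infinite T1 spaces, per the standing convention).\<close>
definition productively ::
    "(('a \<times> 'b) topology \<Rightarrow> bool) \<Rightarrow> ('b topology \<Rightarrow> bool) \<Rightarrow> 'a topology \<Rightarrow> bool" where
  "productively Qprod Q X \<longleftrightarrow>
     (\<forall>Y. infinite (topspace Y) \<and> t1_space Y \<and> Q Y \<longrightarrow> Qprod (prod_topology X Y))"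

end

theory Submission
  imports Defs
begin

text \<open>
  Let \<open>W\<^sub>n\<close> be open covers of \<open>X \<times> Y\<close>. For compact \<open>K \<subseteq> X\<close>, the tube lemma turns \<open>W\<^sub>n\<close> into
  an open cover of \<open>Y\<close> by sets \<open>V\<close> such that \<open>U \<times> V\<close> is covered by finitely many members of
  \<open>W\<^sub>n\<close> for some open \<open>U \<supseteq> K\<close>. Selecting from these covers by the property of \<open>Y\<close> and
  intersecting the countably many witnesses \<open>U\<close> gives a \<open>G\<^sub>\<delta>\<close> set \<open>G \<supseteq> K\<close> over which the
  selection lifts to \<open>X \<times> Y\<close>. Doing this at every stage \<open>m\<close>, with the \<open>Y\<close>-selection shifted to
  start at \<open>W\<^sub>m\<close>, yields members of \<open>\<G>\<^sub>K\<close>; \<open>S\<^sub>1(\<G>\<^sub>K, \<G>\<^sub>\<Gamma>)\<close> picks one \<open>G\<^sub>m\<close> per stage so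
  that they cover \<open>X\<close>, and the finitely many members of \<open>W\<^sub>n\<close> attached to the stages
  \<open>m \<le> n\<close> form the selection for \<open>X \<times> Y\<close>.
\<close>

definition tube_cover :: "'a topology \<Rightarrow> 'b topology \<Rightarrow> ('a \<times> 'b) set set \<Rightarrow> 'a set \<Rightarrow> 'b set set"
  where "tube_cover X Y W K =
    {V. openin Y V \<and> (\<exists>U F. openin X U \<and> K \<subseteq> U \<and> finite F \<and> F \<subseteq> W \<and> U \<times> V \<subseteq> \<Union>F)}"

lemma open_cover_tube_cover:
  assumes W: "open_cover (prod_topology X Y) W" and K: "compactin X K"
  shows "open_cover Y (tube_cover X Y W K)"
proof -
  have "y \<in> \<Union>(tube_cover X Y W K)" if y: "y \<in> topspace Y" for y
  proof -
    have "K \<times> {y} \<subseteq> \<Union>W"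
      using W K y compactin_subset_topspace unfolding open_cover_def by fastforce
    then obtain F where F: "finite F" "F \<subseteq> W" "K \<times> {y} \<subseteq> \<Union>F"
      using compactinD[of "prod_topology X Y" "K \<times> {y}" W] W K y
      by (auto simp: compactin_Times open_cover_def)
    have "openin (prod_topology X Y) (\<Union>F)"
      using F W unfolding open_cover_def by blast
    then obtain U V where "openin X U" "openin Y V" "K \<subseteq> U" "y \<in> V" "U \<times> V \<subseteq> \<Union>F"
      using tube_lemma_left[OF _ K y F(3)] by blast
    with F show ?thesis
      unfolding tube_cover_def by blast
  qed
  then show ?thesis
    unfolding open_cover_def tube_cover_def by (auto dest: openin_subset)
qed

lemma gdelta_in_topspace_Inter:
  assumes "countable \<U>" and "\<And>U. U \<in> \<U> \<Longrightarrow> openin X U"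
  shows "gdelta_in X (\<Inter>(insert (topspace X) \<U>))"
  using assms by (intro gdelta_in_Inter) (auto intro: open_imp_gdelta_in)

lemma S1_G_K_G_Gamma_cover:
  fixes \<A> :: "nat \<Rightarrow> 'a set set"
  assumes S: "S1 (G_K X) (G_Gamma X)"
    and gdelta: "\<And>m U. U \<in> \<A> m \<Longrightarrow> gdelta_in X U"
    and compact: "\<And>m K. compactin X K \<Longrightarrow> \<exists>U\<in>\<A> m. K \<subseteq> U"
  shows "\<exists>B. (\<forall>m. B m \<in> \<A> m) \<and> topspace X \<subseteq> \<Union>(range B)"
proof (cases "\<exists>m\<^sub>0. topspace X \<in> \<A> m\<^sub>0")
  case True
  \<comment> \<open>\<open>\<G>\<^sub>K\<close> excludes such \<open>\<A> m\<^sub>0\<close>, but then \<open>topspace X\<close> alone already covers.\<close>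
  then obtain m\<^sub>0 where m\<^sub>0: "topspace X \<in> \<A> m\<^sub>0" ..
  define B where "B m = (if m = m\<^sub>0 then topspace X else SOME U. U \<in> \<A> m)" for m
  have "\<A> m \<noteq> {}" for m
    using compact[OF compactin_empty] by blast
  then have "B m \<in> \<A> m" for m
    using m\<^sub>0 by (simp add: B_def some_in_eq)
  moreover have "topspace X \<subseteq> \<Union>(range B)"
    using rangeI[of B m\<^sub>0] by (auto simp: B_def)
  ultimately show ?thesis by blast
next
  case False
  then have "\<A> m \<in> G_K X" for m
    using gdelta compact unfolding G_K_def by blast
  then obtain B where B: "\<And>m. B m \<in> \<A> m" and "range B \<in> G_Gamma X"
    using S[unfolded S1_def, rule_format, of \<A>] by blast
  then have "\<Union>(range B) = topspace X"
    unfolding G_Gamma_def by blast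
  with B show ?thesis by blast
qed

lemma gdelta_tube_exists:
  fixes \<V> :: "nat \<Rightarrow> 'b set set" and W :: "nat \<Rightarrow> ('a \<times> 'b) set set"
  assumes K: "K \<subseteq> topspace X"
    and \<V>: "\<And>k. finite (\<V> k)" "\<And>k. \<V> k \<subseteq> tube_cover X Y (W k) K"
  shows "\<exists>G F. gdelta_in X G \<and> K \<subseteq> G \<and>
    (\<forall>k. finite (F k) \<and> F k \<subseteq> W k \<and> G \<times> \<Union>(\<V> k) \<subseteq> \<Union>(F k))"
proof -
  have "\<forall>k V. \<exists>U F. V \<in> tube_cover X Y (W k) K \<longrightarrow>
      openin X U \<and> K \<subseteq> U \<and> finite F \<and> F \<subseteq> W k \<and> U \<times> V \<subseteq> \<Union>F"
    unfolding tube_cover_def by blast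
  then obtain U F where UF: "\<And>k V. V \<in> tube_cover X Y (W k) K \<Longrightarrow>
      openin X (U k V) \<and> K \<subseteq> U k V \<and> finite (F k V) \<and> F k V \<subseteq> W k \<and> U k V \<times> V \<subseteq> \<Union>(F k V)"
    unfolding choice_iff by blast
  have UF\<V>: "openin X (U k V) \<and> K \<subseteq> U k V \<and> finite (F k V) \<and> F k V \<subseteq> W k \<and>
      U k V \<times> V \<subseteq> \<Union>(F k V)" if "V \<in> \<V> k" for k V
    using UF[OF subsetD[OF \<V>(2) that]] .
  define G where "G = \<Inter>(insert (topspace X) ((\<lambda>(k, V). U k V) ` (SIGMA k:UNIV. \<V> k)))"
  have "countable (SIGMA k:UNIV. \<V> k)"
    using \<V>(1) by (intro countable_SIGMA) (auto intro: countable_finite)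
  then have "gdelta_in X G"
    unfolding G_def using UF\<V> by (intro gdelta_in_topspace_Inter) auto
  moreover have "K \<subseteq> G"
    unfolding G_def using K UF\<V> by fastforce
  moreover have "finite (\<Union>V\<in>\<V> k. F k V) \<and> (\<Union>V\<in>\<V> k. F k V) \<subseteq> W k \<and>
      G \<times> \<Union>(\<V> k) \<subseteq> \<Union>(\<Union>V\<in>\<V> k. F k V)" for k
    using \<V>(1) UF\<V> unfolding G_def by fastforce
  ultimately show ?thesis
    by (intro exI[of _ G] exI[of _ "\<lambda>k. \<Union>V\<in>\<V> k. F k V"]) blast
qed

lemma S1_G_K_G_Gamma_compact_cover:
  assumes S: "S1 (G_K X) (G_Gamma X)"
    and G: "\<And>m K. compactin X K \<Longrightarrow> gdelta_in X (G m K)" "\<And>m K. compactin X K \<Longrightarrow> K \<subseteq> G m K"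
  shows "\<exists>K. (\<forall>m::nat. compactin X (K m)) \<and> topspace X \<subseteq> (\<Union>m. G m (K m))"
proof -
  have "\<exists>B. (\<forall>m. B m \<in> G m ` {K. compactin X K}) \<and> topspace X \<subseteq> \<Union>(range B)"
  proof (rule S1_G_K_G_Gamma_cover[OF S])
    show "gdelta_in X U" if "U \<in> G m ` {K. compactin X K}" for m U
      using that G(1) by blast
    show "\<exists>U\<in>G m ` {K. compactin X K}. K \<subseteq> U" if K: "compactin X K" for m K
      using G(2)[OF K] K by blast
  qed
  then obtain B where B: "\<forall>m. B m \<in> G m ` {K. compactin X K}" and cover: "topspace X \<subseteq> \<Union>(range B)"
    by (elim exE conjE)
  have "\<forall>m. \<exists>K. compactin X K \<and> B m = G m K"
    using B by blast
  then obtain K where "\<forall>m. compactin X (K m) \<and> B m = G m (K m)"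
    unfolding choice_iff by blast
  with cover show ?thesis
    by (intro exI[of _ K]) auto
qed

lemma product_selection_from_hulls:
  fixes W :: "nat \<Rightarrow> ('a \<times> 'b) set set" and P :: "(nat \<Rightarrow> 'b set) \<Rightarrow> bool"
  assumes S: "S1 (G_K X) (G_Gamma X)"
    and hull: "\<And>m K. compactin X K \<Longrightarrow> P (\<lambda>k. \<Union>(\<V> m K k)) \<and> gdelta_in X (G m K) \<and> K \<subseteq> G m K \<and>
      (\<forall>k. finite (F m K k) \<and> F m K k \<subseteq> W (k + m) \<and> G m K \<times> \<Union>(\<V> m K k) \<subseteq> \<Union>(F m K k))"
    and P_mono: "\<And>S T. P S \<Longrightarrow> (\<And>k. S k \<subseteq> T k) \<Longrightarrow> P T"
  shows "\<exists>H. (\<forall>n. finite (H n) \<and> H n \<subseteq> W n) \<and>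
    (\<forall>x\<in>topspace X. \<exists>m. P (\<lambda>k. {y. (x, y) \<in> \<Union>(H (k + m))}))"
proof -
  have "\<exists>K. (\<forall>m::nat. compactin X (K m)) \<and> topspace X \<subseteq> (\<Union>m. G m (K m))"
    using hull by (intro S1_G_K_G_Gamma_compact_cover[OF S]) blast+
  then obtain K where K: "\<And>m. compactin X (K m)" and cover: "topspace X \<subseteq> (\<Union>m. G m (K m))"
    by blast
  define H where "H n = (\<Union>m\<le>n. F m (K m) (n - m))" for n
  have H_finite: "finite (H n) \<and> H n \<subseteq> W n" for n
    unfolding H_def using hull[OF K] by fastforce
  have H_slices: "P (\<lambda>k. {y. (x, y) \<in> \<Union>(H (k + m))})" if x: "x \<in> G m (K m)" for x m
  proof (rule P_mono)
    show "P (\<lambda>k. \<Union>(\<V> m (K m) k))"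
      using hull[OF K] by blast
    show "\<Union>(\<V> m (K m) k) \<subseteq> {y. (x, y) \<in> \<Union>(H (k + m))}" for k
    proof
      fix y assume "y \<in> \<Union>(\<V> m (K m) k)"
      then have "(x, y) \<in> \<Union>(F m (K m) k)"
        using x hull[OF K, of m] by blast
      moreover have "F m (K m) k \<subseteq> H (k + m)"
        unfolding H_def using UN_upper[of m "{..k + m}" "\<lambda>j. F j (K j) (k + m - j)"] by simp
      ultimately show "y \<in> {y. (x, y) \<in> \<Union>(H (k + m))}"
        by blast
    qed
  qed
  have "\<exists>m. P (\<lambda>k. {y. (x, y) \<in> \<Union>(H (k + m))})" if x: "x \<in> topspace X" for x
  proof -
    obtain m where "x \<in> G m (K m)"
      using cover x by blast
    then show ?thesis
      using H_slices by blast
  qed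
  with H_finite show ?thesis
    by (intro exI[of _ H]) blast
qed

lemma product_selection:
  fixes X :: "'a topology" and Y :: "'b topology" and W :: "nat \<Rightarrow> ('a \<times> 'b) set set"
    and P :: "(nat \<Rightarrow> 'b set) \<Rightarrow> bool"
  assumes S: "S1 (G_K X) (G_Gamma X)"
    and select: "\<And>m K. compactin X K \<Longrightarrow> \<exists>\<V>.
      (\<forall>k. finite (\<V> k) \<and> \<V> k \<subseteq> tube_cover X Y (W (k + m)) K) \<and> P (\<lambda>k. \<Union>(\<V> k))"
    and P_mono: "\<And>S T. P S \<Longrightarrow> (\<And>k. S k \<subseteq> T k) \<Longrightarrow> P T"
  shows "\<exists>H. (\<forall>n. finite (H n) \<and> H n \<subseteq> W n) \<and>
    (\<forall>x\<in>topspace X. \<exists>m. P (\<lambda>k. {y. (x, y) \<in> \<Union>(H (k + m))}))"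
proof -
  have "\<exists>\<V> G F. P (\<lambda>k. \<Union>(\<V> k)) \<and> gdelta_in X G \<and> K \<subseteq> G \<and>
      (\<forall>k. finite (F k) \<and> F k \<subseteq> W (k + m) \<and> G \<times> \<Union>(\<V> k) \<subseteq> \<Union>(F k))"
    if K: "compactin X K" for m K
  proof -
    obtain \<V> where \<V>: "\<forall>k. finite (\<V> k) \<and> \<V> k \<subseteq> tube_cover X Y (W (k + m)) K"
      and P\<V>: "P (\<lambda>k. \<Union>(\<V> k))"
      using select[OF K, of m] by (elim exE conjE)
    have "K \<subseteq> topspace X" "\<And>k. finite (\<V> k)" "\<And>k. \<V> k \<subseteq> tube_cover X Y (W (k + m)) K"
      using K compactin_subset_topspace \<V> by blast+
    then have "\<exists>G F. gdelta_in X G \<and> K \<subseteq> G \<and>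
        (\<forall>k. finite (F k) \<and> F k \<subseteq> W (k + m) \<and> G \<times> \<Union>(\<V> k) \<subseteq> \<Union>(F k))"
      by (rule gdelta_tube_exists)
    then obtain G F where "gdelta_in X G" "K \<subseteq> G"
      "\<forall>k. finite (F k) \<and> F k \<subseteq> W (k + m) \<and> G \<times> \<Union>(\<V> k) \<subseteq> \<Union>(F k)"
      by (elim exE conjE)
    with P\<V> show ?thesis
      by (intro exI[of _ \<V>] exI[of _ G] exI[of _ F] conjI)
  qed
  then have "\<forall>m K. \<exists>\<V> G F. compactin X K \<longrightarrow> P (\<lambda>k. \<Union>(\<V> k)) \<and> gdelta_in X G \<and> K \<subseteq> G \<and>
      (\<forall>k. finite (F k) \<and> F k \<subseteq> W (k + m) \<and> G \<times> \<Union>(\<V> k) \<subseteq> \<Union>(F k))"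
    by blast
  then obtain \<V> G F where "\<And>m K. compactin X K \<Longrightarrow> P (\<lambda>k. \<Union>(\<V> m K k)) \<and>
      gdelta_in X (G m K) \<and> K \<subseteq> G m K \<and>
      (\<forall>k. finite (F m K k) \<and> F m K k \<subseteq> W (k + m) \<and> G m K \<times> \<Union>(\<V> m K k) \<subseteq> \<Union>(F m K k))"
    unfolding choice_iff by blast
  then show ?thesis
    using P_mono by (rule product_selection_from_hulls[OF S])
qed

lemma product_selection_cover:
  fixes X :: "'a topology" and Y :: "'b topology" and W :: "nat \<Rightarrow> ('a \<times> 'b) set set"
  assumes S: "S1 (G_K X) (G_Gamma X)"
    and W: "\<And>n. open_cover (prod_topology X Y) (W n)"
    and select: "\<And>m K. compactin X K \<Longrightarrow> \<exists>\<V>.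
      (\<forall>k. finite (\<V> k) \<and> \<V> k \<subseteq> tube_cover X Y (W (k + m)) K) \<and> \<Union>(\<Union>k. \<V> k) = topspace Y"
  shows "\<exists>H. (\<forall>n. finite (H n) \<and> H n \<subseteq> W n) \<and> \<Union>(\<Union>n. H n) = topspace (prod_topology X Y)"
proof -
  have select_cover: "\<exists>\<V>. (\<forall>k. finite (\<V> k) \<and> \<V> k \<subseteq> tube_cover X Y (W (k + m)) K) \<and>
      topspace Y \<subseteq> (\<Union>k. \<Union>(\<V> k))" if K: "compactin X K" for m K
  proof -
    obtain \<V> where \<V>: "\<forall>k. finite (\<V> k) \<and> \<V> k \<subseteq> tube_cover X Y (W (k + m)) K"
      and \<V>_cover: "\<Union>(\<Union>k. \<V> k) = topspace Y"
      using select[OF K, of m] by (elim exE conjE)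
    have "topspace Y \<subseteq> (\<Union>k. \<Union>(\<V> k))"
      using \<V>_cover by blast
    then show ?thesis
      using \<V> by (intro exI[of _ \<V>] conjI)
  qed
  have "\<exists>H. (\<forall>n. finite (H n) \<and> H n \<subseteq> W n) \<and>
      (\<forall>x\<in>topspace X. \<exists>m. topspace Y \<subseteq> (\<Union>k. {y. (x, y) \<in> \<Union>(H (k + m))}))"
  proof (rule product_selection[where P = "\<lambda>S. topspace Y \<subseteq> (\<Union>k. S k)", OF S])
    show "\<exists>\<V>. (\<forall>k. finite (\<V> k) \<and> \<V> k \<subseteq> tube_cover X Y (W (k + m)) K) \<and>
        topspace Y \<subseteq> (\<Union>k. \<Union>(\<V> k))" if "compactin X K" for m K
      using that by (rule select_cover)
    show "topspace Y \<subseteq> (\<Union>k. T k)" if "topspace Y \<subseteq> (\<Union>k. S k)" "\<And>k. S k \<subseteq> T k" for S T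
      using that by blast
  qed
  then obtain H where H: "\<forall>n. finite (H n) \<and> H n \<subseteq> W n"
    and slices: "\<forall>x\<in>topspace X. \<exists>m. topspace Y \<subseteq> (\<Union>k. {y. (x, y) \<in> \<Union>(H (k + m))})"
    by (elim exE conjE)
  have "\<Union>(\<Union>n. H n) \<subseteq> topspace (prod_topology X Y)"
    using H W openin_subset unfolding open_cover_def by blast
  moreover have "(x, y) \<in> \<Union>(\<Union>n. H n)" if x: "x \<in> topspace X" and y: "y \<in> topspace Y" for x y
  proof -
    obtain m where "topspace Y \<subseteq> (\<Union>k. {y. (x, y) \<in> \<Union>(H (k + m))})"
      using bspec[OF slices x] ..
    then have "y \<in> (\<Union>k. {y. (x, y) \<in> \<Union>(H (k + m))})"
      using y by (rule subsetD)
    then obtain k where "(x, y) \<in> \<Union>(H (k + m))"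
      by blast
    then show ?thesis
      by blast
  qed
  ultimately have "\<Union>(\<Union>n. H n) = topspace (prod_topology X Y)"
    by auto
  with H show ?thesis
    by blast
qed

lemma countable_as_finite_sequence:
  assumes "countable \<C>"
  shows "\<exists>\<V>. (\<forall>k::nat. finite (\<V> k) \<and> \<V> k \<subseteq> \<C>) \<and> (\<Union>k. \<V> k) = \<C>"
proof -
  have "(\<Union>k. {from_nat_into \<C> k} \<inter> \<C>) = \<C>"
    using from_nat_into_surj[OF assms] by blast
  then show ?thesis
    by (intro exI[of _ "\<lambda>k. {from_nat_into \<C> k} \<inter> \<C>"]) auto
qed

lemma Lindelof_space_prod_topology:
  fixes X :: "'a topology" and Y :: "'b topology"
  assumes S: "S1 (G_K X) (G_Gamma X)" and Y: "Lindelof_space Y"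
  shows "Lindelof_space (prod_topology X Y)"
  unfolding Lindelof_space_def
proof (intro allI impI)
  fix \<U> :: "('a \<times> 'b) set set"
  assume "(\<forall>U\<in>\<U>. openin (prod_topology X Y) U) \<and> \<Union>\<U> = topspace (prod_topology X Y)"
  then have \<U>: "open_cover (prod_topology X Y) \<U>"
    unfolding open_cover_def .
  have select: "\<exists>\<V>. (\<forall>k::nat. finite (\<V> k) \<and> \<V> k \<subseteq> tube_cover X Y \<U> K) \<and>
      \<Union>(\<Union>k. \<V> k) = topspace Y" if K: "compactin X K" for K
  proof -
    have "open_cover Y (tube_cover X Y \<U> K)"
      using \<U> K by (rule open_cover_tube_cover)
    then have "\<exists>\<C>. countable \<C> \<and> \<C> \<subseteq> tube_cover X Y \<U> K \<and> \<Union>\<C> = topspace Y"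
      unfolding open_cover_def by (intro Lindelof_spaceD[OF Y]) auto
    then obtain \<C> where \<C>: "countable \<C>" "\<C> \<subseteq> tube_cover X Y \<U> K" "\<Union>\<C> = topspace Y"
      by (elim exE conjE)
    obtain \<V> where \<V>: "\<forall>k::nat. finite (\<V> k) \<and> \<V> k \<subseteq> \<C>" "(\<Union>k. \<V> k) = \<C>"
      using countable_as_finite_sequence[OF \<C>(1)] by (elim exE conjE)
    have "\<Union>(\<Union>k. \<V> k) = topspace Y"
      using \<V>(2) \<C>(3) by simp
    moreover have "\<forall>k. finite (\<V> k) \<and> \<V> k \<subseteq> tube_cover X Y \<U> K"
      using \<V>(1) \<C>(2) by blast
    ultimately show ?thesis
      by (intro exI[of _ \<V>] conjI)
  qed
  have "\<exists>H. (\<forall>n::nat. finite (H n) \<and> H n \<subseteq> \<U>) \<and> \<Union>(\<Union>n. H n) = topspace (prod_topology X Y)"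
    by (rule product_selection_cover[where W = "\<lambda>_. \<U>", OF S \<U>]) (fact select)
  then obtain H where H: "\<forall>n::nat. finite (H n) \<and> H n \<subseteq> \<U>"
    and cover: "\<Union>(\<Union>n. H n) = topspace (prod_topology X Y)"
    by (elim exE conjE)
  have "countable (\<Union>n. H n)"
    using H by (intro countable_UN) (auto intro: countable_finite)
  moreover have "(\<Union>n. H n) \<subseteq> \<U>"
    using H by blast
  ultimately show "\<exists>\<V>. countable \<V> \<and> \<V> \<subseteq> \<U> \<and> \<Union>\<V> = topspace (prod_topology X Y)"
    using cover by (intro exI[of _ "\<Union>n. H n"] conjI)
qed

lemma Menger_space_prod_topology:
  fixes X :: "'a topology" and Y :: "'b topology"
  assumes S: "S1 (G_K X) (G_Gamma X)" and Y: "Menger_space Y"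
  shows "Menger_space (prod_topology X Y)"
  unfolding Menger_space_def
proof (intro allI impI)
  fix W :: "nat \<Rightarrow> ('a \<times> 'b) set set"
  assume W: "\<forall>n. open_cover (prod_topology X Y) (W n)"
  have select: "\<exists>\<V>. (\<forall>k. finite (\<V> k) \<and> \<V> k \<subseteq> tube_cover X Y (W (k + m)) K) \<and>
      \<Union>(\<Union>k. \<V> k) = topspace Y" if K: "compactin X K" for m K
  proof (rule Y[unfolded Menger_space_def, rule_format])
    show "open_cover Y (tube_cover X Y (W (k + m)) K)" for k
      using W K by (blast intro: open_cover_tube_cover)
  qed
  show "\<exists>\<V>. (\<forall>n. finite (\<V> n) \<and> \<V> n \<subseteq> W n) \<and> \<Union>(\<Union>n. \<V> n) = topspace (prod_topology X Y)"
    by (rule product_selection_cover[OF S W[rule_format]]) (fact select)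
qed

lemma Hurewicz_space_prod_topology:
  fixes X :: "'a topology" and Y :: "'b topology"
  assumes S: "S1 (G_K X) (G_Gamma X)" and Y: "Hurewicz_space Y"
  shows "Hurewicz_space (prod_topology X Y)"
  unfolding Hurewicz_space_def
proof (intro allI impI)
  fix W :: "nat \<Rightarrow> ('a \<times> 'b) set set"
  assume W: "\<forall>n. open_cover (prod_topology X Y) (W n)"
  define P :: "(nat \<Rightarrow> 'b set) \<Rightarrow> bool"
    where "P S \<longleftrightarrow> (\<forall>y\<in>topspace Y. \<forall>\<^sub>F k in sequentially. y \<in> S k)" for S
  have select: "\<exists>\<V>. (\<forall>k. finite (\<V> k) \<and> \<V> k \<subseteq> tube_cover X Y (W (k + m)) K) \<and> P (\<lambda>k. \<Union>(\<V> k))"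
    if K: "compactin X K" for m K
  proof -
    have covers: "open_cover Y (tube_cover X Y (W (k + m)) K)" for k
      using W K by (blast intro: open_cover_tube_cover)
    obtain \<V> where \<V>: "\<forall>k. finite (\<V> k) \<and> \<V> k \<subseteq> tube_cover X Y (W (k + m)) K"
        "\<forall>y\<in>topspace Y. \<forall>\<^sub>F k in sequentially. y \<in> \<Union>(\<V> k)"
      using Y[unfolded Hurewicz_space_def, rule_format, of "\<lambda>k. tube_cover X Y (W (k + m)) K", OF covers] by (elim exE conjE)
    show ?thesis
      unfolding P_def by (intro exI[of _ \<V>]) (use \<V> in auto)
  qed
  have P_mono: "P T" if "P S" "\<And>k. S k \<subseteq> T k" for S T
    using that unfolding P_def by (blast intro: eventually_mono)
  have "\<exists>H. (\<forall>n. finite (H n) \<and> H n \<subseteq> W n) \<and>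
      (\<forall>x\<in>topspace X. \<exists>m. P (\<lambda>k. {y. (x, y) \<in> \<Union>(H (k + m))}))"
    by (rule product_selection[OF S]) (fact select, fact P_mono)
  then obtain H where H: "\<forall>n. finite (H n) \<and> H n \<subseteq> W n"
    and slices: "\<forall>x\<in>topspace X. \<exists>m. P (\<lambda>k. {y. (x, y) \<in> \<Union>(H (k + m))})"
    by (elim exE conjE)
  have "\<forall>\<^sub>F n in sequentially. (x, y) \<in> \<Union>(H n)" if x: "x \<in> topspace X" and y: "y \<in> topspace Y" for x y
  proof -
    obtain m where "P (\<lambda>k. {y. (x, y) \<in> \<Union>(H (k + m))})"
      using bspec[OF slices x] ..
    then have "\<forall>\<^sub>F k in sequentially. (x, y) \<in> \<Union>(H (k + m))"
      using y unfolding P_def by auto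
    then show ?thesis
      using eventually_sequentially_seg[of "\<lambda>n. (x, y) \<in> \<Union>(H n)" m] by blast
  qed
  then show "\<exists>\<V>. (\<forall>n. finite (\<V> n) \<and> \<V> n \<subseteq> W n) \<and>
      (\<forall>z\<in>topspace (prod_topology X Y). \<forall>\<^sub>F n in sequentially. z \<in> \<Union>(\<V> n))"
    by (intro exI[of _ H]) (use H in auto)
qed

theorem theorem4p12:
  fixes X :: "'a topology"
  assumes "infinite (topspace X)" and "t1_space X"
    and "S1 (G_K X) (G_Gamma X)"
  shows "productively Lindelof_space (Lindelof_space :: 'b topology \<Rightarrow> bool) X
       \<and> productively Menger_space (Menger_space :: 'b topology \<Rightarrow> bool) X
       \<and> productively Hurewicz_space (Hurewicz_space :: 'b topology \<Rightarrow> bool) X"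
  unfolding productively_def
  using Lindelof_space_prod_topology Menger_space_prod_topology Hurewicz_space_prod_topology assms(3)
  by blast

end
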